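(* For every $r>0$, every $\theta,\varphi\in[0,2\pi]$ and every positive integer $L$, $$\frac{12}{L}\sum_{j=0}^{L-1}\big|1-re^{i(j\theta+\varphi)}\big|^2\ \ge\ \big|1-re^{i\varphi}\big|^2.$$ *)

theory Defs
  imports Complex_Main
begin

end

theory Submission
  imports Defs
begin

(*
  Write x_j = j*\<theta> + \<phi> and chord x = |1 - e^(ix)|, the length of the chord from 1 to e^(ix).
  For every real r one has the identity |1 - r e^(ix)|^2 = (1 - r)^2 + r * chord(x)^2, so the claim
  reduces (as r > 0) to the pure chord estimate  L * chord(\<phi>)^2 \<le> 12 * \<Sum>_{j<L} chord(x_j)^2.

  The chord is subadditive and even, and \<phi> = x_j + x_(i-j) - x_i for j \<le> i; hence
  chord(\<phi>)^2 \<le> 3 (chord(x_j)^2 + chord(x_(i-j))^2 + chord(x_i)^2).  Summing this over the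
  L(L+1)/2 pairs j \<le> i < L and counting how often each chord(x_m)^2 occurs (at most 2L+1
  times) gives the estimate; this counting step is isolated as an abstract averaging lemma
  about nonnegative sequences.
*)

definition chord :: "real \<Rightarrow> real" where
  "chord x = cmod (1 - exp (\<i> * complex_of_real x))"

lemma chord_nonneg [simp]: "0 \<le> chord x"
  unfolding chord_def by simp

lemma norm_one_minus_scaled_exp_sq:
  "(cmod (1 - complex_of_real r * exp (\<i> * complex_of_real x)))\<^sup>2 = 1 - 2 * r * cos x + r\<^sup>2"
proof -
  have e: "exp (\<i> * complex_of_real x) = Complex (cos x) (sin x)"
    by (simp add: cis_conv_exp[symmetric] complex_eq_iff)
  have "(cmod (1 - complex_of_real r * exp (\<i> * complex_of_real x)))\<^sup>2
        = (1 - r * cos x)\<^sup>2 + (r * sin x)\<^sup>2"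
    unfolding e cmod_power2 by simp
  also have "\<dots> = 1 - 2 * r * cos x + r\<^sup>2 * ((sin x)\<^sup>2 + (cos x)\<^sup>2)"
    by algebra
  finally show ?thesis by simp
qed

lemma chord_sq: "(chord x)\<^sup>2 = 2 - 2 * cos x"
  using norm_one_minus_scaled_exp_sq[of 1 x] unfolding chord_def by simp

lemma norm_one_minus_scaled_exp_sq_chord:
  "(cmod (1 - complex_of_real r * exp (\<i> * complex_of_real x)))\<^sup>2 = (1 - r)\<^sup>2 + r * (chord x)\<^sup>2"
  unfolding norm_one_minus_scaled_exp_sq chord_sq by (simp add: power2_eq_square algebra_simps)

text \<open>The chord is even, since its square depends only on cos x.\<close>

lemma chord_uminus: "chord (- x) = chord x"
proof -
  have "(chord (- x))\<^sup>2 = (chord x)\<^sup>2"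
    by (simp add: chord_sq)
  then show ?thesis by (simp add: power2_eq_iff_nonneg)
qed

text \<open>Subadditivity: 1 - e^(i(a+b)) = (1 - e^(ia)) + e^(ia) (1 - e^(ib)) with |e^(ia)| = 1.\<close>

lemma chord_add: "chord (a + b) \<le> chord a + chord b"
proof -
  define A where "A = exp (\<i> * complex_of_real a)"
  define B where "B = exp (\<i> * complex_of_real b)"
  have "cmod A = 1" unfolding A_def by (simp add: norm_exp_eq_Re)
  have "exp (\<i> * complex_of_real (a + b)) = A * B"
    unfolding A_def B_def by (simp add: distrib_left exp_add)
  then have "chord (a + b) = cmod ((1 - A) + A * (1 - B))"
    unfolding chord_def by (simp add: algebra_simps)
  also have "\<dots> \<le> cmod (1 - A) + cmod A * cmod (1 - B)"
    using norm_triangle_ineq[of "1 - A" "A * (1 - B)"] by (simp add: norm_mult)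
  also have "\<dots> = chord a + chord b"
    using \<open>cmod A = 1\<close> unfolding chord_def A_def B_def by simp
  finally show ?thesis .
qed

text \<open>The key pointwise estimate: \<phi> = x_j + x_(i-j) - x_i along the progression x_m = m\<theta> + \<phi>.\<close>

lemma chord_progression_bound:
  fixes \<theta> \<phi> :: real and i j :: nat
  assumes "j \<le> i"
  shows "chord \<phi> \<le> chord (real j * \<theta> + \<phi>) + chord (real (i - j) * \<theta> + \<phi>) + chord (real i * \<theta> + \<phi>)"
proof -
  have "\<phi> = (real j * \<theta> + \<phi>) + (real (i - j) * \<theta> + \<phi>) + - (real i * \<theta> + \<phi>)"
    using assms by (simp add: of_nat_diff algebra_simps)
  then have "chord \<phi> \<le> chord (real j * \<theta> + \<phi>) + chord (real (i - j) * \<theta> + \<phi>)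
                       + chord (- (real i * \<theta> + \<phi>))"
    by (metis chord_add add_right_mono order_trans)
  then show ?thesis by (simp only: chord_uminus)
qed

lemma square_sum3_le: "((x::real) + y + z)\<^sup>2 \<le> 3 * (x\<^sup>2 + y\<^sup>2 + z\<^sup>2)"
proof -
  have "0 \<le> (x - y)\<^sup>2 + (y - z)\<^sup>2 + (x - z)\<^sup>2" by simp
  then show ?thesis by (simp add: power2_eq_square algebra_simps)
qed

lemma sum_triangle_swap:
  fixes F :: "nat \<Rightarrow> 'a::comm_semiring_1"
  shows "(\<Sum>i<L. \<Sum>j\<in>{0..i}. F j) = (\<Sum>j<L. of_nat (L - j) * F j)"
proof (induction L)
  case 0
  then show ?case by simp
next
  case (Suc L)
  have "(\<Sum>j<Suc L. of_nat (Suc L - j) * F j) = (\<Sum>j<Suc L. of_nat (L - j) * F j + F j)"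
    by (rule sum.cong) (auto simp: Suc_diff_le algebra_simps)
  also have "\<dots> = (\<Sum>j<L. of_nat (L - j) * F j) + (\<Sum>j\<in>{0..L}. F j)"
    by (simp add: sum.distrib atLeast0AtMost lessThan_Suc_atMost[symmetric])
  finally show ?case using Suc by simp
qed

text \<open>
  Averaging over triangles: if a constant c is dominated by F j + F (i-j) + F i for every
  j \<le> i, then summing over the L(L+1)/2 pairs (each F m occurring 2(L-m) + m + 1 \<le> 2L + 1
  times) yields L c \<le> 4 \<Sum>_{m<L} F m.
\<close>

lemma triangle_averaging:
  fixes F :: "nat \<Rightarrow> real" and c :: real
  assumes F_nonneg: "\<And>m. 0 \<le> F m"
    and dominated: "\<And>i j. j \<le> i \<Longrightarrow> c \<le> F j + F (i - j) + F i"
  shows "real L * c \<le> 4 * (\<Sum>m<L. F m)"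
proof -
  let ?S = "\<Sum>m<L. F m"
  have reflect: "(\<Sum>j\<in>{0..i}. F (i - j)) = (\<Sum>j\<in>{0..i}. F j)" for i
    using sum.atLeastAtMost_rev[of "\<lambda>j. F (i - j)" 0 i] by simp
  have pairs: "2 * (\<Sum>i<L. \<Sum>j\<in>{0..i}. c) = real L * (real L + 1) * c"
    by (induction L) (simp_all add: algebra_simps)
  have "(\<Sum>i<L. \<Sum>j\<in>{0..i}. c) \<le> (\<Sum>i<L. \<Sum>j\<in>{0..i}. F j + F (i - j) + F i)"
    by (intro sum_mono dominated) auto
  also have "\<dots> = (\<Sum>i<L. 2 * (\<Sum>j\<in>{0..i}. F j) + real (Suc i) * F i)"
    by (simp add: sum.distrib reflect)
  also have "\<dots> = (\<Sum>m<L. (2 * real (L - m) + real (Suc m)) * F m)"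
    by (simp only: sum.distrib sum_triangle_swap sum_distrib_left[symmetric] distrib_right mult.assoc)
  also have "\<dots> \<le> (\<Sum>m<L. (2 * real L + 1) * F m)"
    by (intro sum_mono mult_right_mono F_nonneg) (auto simp: of_nat_diff)
  also have "\<dots> \<le> 2 * (real L + 1) * ?S"
    using sum_nonneg[of "{..<L}" F] F_nonneg
    by (simp add: sum_distrib_left[symmetric] mult_right_mono)
  finally have "(real L + 1) * (real L * c) \<le> (real L + 1) * (4 * ?S)"
    using pairs by (simp add: algebra_simps)
  then show ?thesis by (simp add: mult_le_cancel_left_pos)
qed

lemma chord_progression_average:
  fixes \<theta> \<phi> :: real
  shows "real L * (chord \<phi>)\<^sup>2 \<le> 12 * (\<Sum>j<L. (chord (real j * \<theta> + \<phi>))\<^sup>2)"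
proof -
  define F where "F j = (chord (real j * \<theta> + \<phi>))\<^sup>2" for j :: nat
  have "(chord \<phi>)\<^sup>2 / 3 \<le> F j + F (i - j) + F i" if "j \<le> i" for i j
  proof -
    have "(chord \<phi>)\<^sup>2 \<le> (chord (real j * \<theta> + \<phi>) + chord (real (i - j) * \<theta> + \<phi>)
                            + chord (real i * \<theta> + \<phi>))\<^sup>2"
      using chord_progression_bound[OF that] by (simp add: power_mono)
    also have "\<dots> \<le> 3 * (F j + F (i - j) + F i)"
      unfolding F_def by (rule square_sum3_le)
    finally show ?thesis by simp
  qed
  then have "real L * ((chord \<phi>)\<^sup>2 / 3) \<le> 4 * (\<Sum>j<L. F j)"
    by (intro triangle_averaging) (simp_all add: F_def)
  then show ?thesis unfolding F_def by simp
qed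

theorem proposition6p1:
  fixes r \<theta> \<phi> :: real and L :: nat
  assumes "r > 0"
    and "0 \<le> \<theta>" and "\<theta> \<le> 2 * pi"
    and "0 \<le> \<phi>" and "\<phi> \<le> 2 * pi"
    and "L > 0"
  shows "12 / real L * (\<Sum>j<L. (cmod (1 - complex_of_real r * exp (\<i> * complex_of_real (real j * \<theta> + \<phi>))))\<^sup>2)
           \<ge> (cmod (1 - complex_of_real r * exp (\<i> * complex_of_real \<phi>)))\<^sup>2"
proof -
  define T where "T = (\<Sum>j<L. (chord (real j * \<theta> + \<phi>))\<^sup>2)"
  have L_pos: "real L > 0" using \<open>L > 0\<close> by simp
  have chord_bound: "(chord \<phi>)\<^sup>2 \<le> 12 * T / real L"
    using chord_progression_average[of L \<phi> \<theta>] L_pos unfolding T_def by (simp add: field_simps)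
  have "(1 - r)\<^sup>2 + r * (chord \<phi>)\<^sup>2 \<le> 12 * (1 - r)\<^sup>2 + r * (12 * T / real L)"
    using chord_bound \<open>r > 0\<close> by (intro add_mono mult_left_mono) simp_all
  also have "\<dots> = 12 / real L * (real L * (1 - r)\<^sup>2 + r * T)"
    using L_pos by (simp add: field_simps)
  finally show ?thesis
    unfolding norm_one_minus_scaled_exp_sq_chord T_def by (simp add: sum.distrib sum_distrib_left)
qed

end
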